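(* Consider a word $uav$ with $a \in A$ and $|ua| = i$. If the attribute $(x_i,y_i)$ at position $i$ satisfies $x_i + y_i > k+1$, then $uav \sim_k uv$.
   Context: $A$ is a finite alphabet and $k\in\mathbb{N}$. A word $a_1\cdots a_\ell$ is a (scattered) subword of $v$ if $v=v_0a_1v_1\cdots a_\ell v_\ell$; Simon's congruence $u\sim_k v$ holds iff $u$ and $v$ have the same subwords of length at most $k$. An $\mathsf{X}$-ranker is a nonempty word over $\{\mathsf{X}_a : a\in A\}$ and a $\mathsf{Y}$-ranker a nonempty word over $\{\mathsf{Y}_a : a\in A\}$; for a word $w$, $\mathsf{X}_a(w)$ is the smallest $a$-position of $w$, $r\mathsf{X}_a(w)$ is the smallest $a$-position greater than $r(w)$, $\mathsf{Y}_a(w)$ is the greatest $a$-position, and $r\mathsf{Y}_a(w)$ is the greatest $a$-position smaller than $r(w)$ (possibly undefined). The attribute of position $i$ of a word is $(x_i,y_i)$, where $x_i$ is the length of a shortest $\mathsf{X}$-ranker reaching $i$ and $y_i$ is the length of a shortest $\mathsf{Y}$-ranker reaching $i$. *)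

theory Defs
  imports Main "HOL-Library.Sublist"
begin

(* Words are lists; positions are 1-based: position j of w carries letter w ! (j - 1). *)

definition simon_cong :: "nat \<Rightarrow> 'a list \<Rightarrow> 'a list \<Rightarrow> bool" where
  "simon_cong k u v \<longleftrightarrow> (\<forall>w. length w \<le> k \<longrightarrow> (subseq w u \<longleftrightarrow> subseq w v))"

definition x_step :: "'a list \<Rightarrow> 'a \<Rightarrow> nat \<Rightarrow> nat option" where
  "x_step w a p = (if \<exists>j. p < j \<and> j \<le> length w \<and> w ! (j - 1) = a
     then Some (LEAST j. p < j \<and> j \<le> length w \<and> w ! (j - 1) = a) else None)"

definition y_step :: "'a list \<Rightarrow> 'a \<Rightarrow> nat \<Rightarrow> nat option" where
  "y_step w a p = (if \<exists>j. 1 \<le> j \<and> j < p \<and> j \<le> length w \<and> w ! (j - 1) = a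
     then Some (GREATEST j. 1 \<le> j \<and> j < p \<and> j \<le> length w \<and> w ! (j - 1) = a) else None)"

(* Evaluation of a ranker X_{a1} ... X_{an} (list [a1,...,an]), applied left to right *)
fun run_from :: "('a list \<Rightarrow> 'a \<Rightarrow> nat \<Rightarrow> nat option) \<Rightarrow> 'a list \<Rightarrow> nat \<Rightarrow> 'a list \<Rightarrow> nat option" where
  "run_from st w p [] = Some p"
| "run_from st w p (a # r) = (case st w a p of None \<Rightarrow> None | Some q \<Rightarrow> run_from st w q r)"

definition x_ranker_eval :: "'a list \<Rightarrow> 'a list \<Rightarrow> nat option" where
  "x_ranker_eval w r = run_from x_step w 0 r"

definition y_ranker_eval :: "'a list \<Rightarrow> 'a list \<Rightarrow> nat option" where
  "y_ranker_eval w r = run_from y_step w (length w + 1) r"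

definition x_attr :: "'a set \<Rightarrow> 'a list \<Rightarrow> nat \<Rightarrow> nat" where
  "x_attr A w i = (LEAST n. \<exists>r. r \<noteq> [] \<and> set r \<subseteq> A \<and> length r = n \<and> x_ranker_eval w r = Some i)"

definition y_attr :: "'a set \<Rightarrow> 'a list \<Rightarrow> nat \<Rightarrow> nat" where
  "y_attr A w i = (LEAST n. \<exists>r. r \<noteq> [] \<and> set r \<subseteq> A \<and> length r = n \<and> y_ranker_eval w r = Some i)"

end

theory Submission
  imports Defs
begin

(* Suppose s has length at most k and embeds into uav but not into uv. Splitting s after its
   longest prefix p that embeds into u gives s = p a q with p embedding into u but p a not, and
   q embedding into v but a q not. The X-ranker X_p follows the leftmost embedding of p, which
   ends inside u; as p a does not embed into u, no a occurs in u after that point, so X_p X_a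
   reaches the inserted a and x_i <= |p| + 1. Y-rankers on a word are X-rankers on its reversal,
   so symmetrically y_i <= |q| + 1, whence x_i + y_i <= |s| + 2 <= k + 2. *)

(* The factor of w at the 1-based positions q + 1, ..., r. *)
definition seg :: "'a list \<Rightarrow> nat \<Rightarrow> nat \<Rightarrow> 'a list" where
  "seg w q r = take (r - q) (drop q w)"

lemma seg_append:
  assumes "q \<le> j" "j \<le> r"
  shows "seg w q j @ seg w j r = seg w q r"
proof -
  have "r - q = (j - q) + (r - j)" using assms by simp
  then have "seg w q r = take (j - q) (drop q w) @ take (r - j) (drop (j - q) (drop q w))"
    unfolding seg_def by (simp only: take_add)
  then show ?thesis unfolding seg_def using assms by simp
qed

lemma seg_eq_Cons:
  assumes "q < r" "r \<le> length w"
  shows "seg w q r = w ! q # seg w (Suc q) r"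
proof -
  have "r - q = Suc (r - Suc q)" using assms by simp
  then show ?thesis unfolding seg_def using assms by (simp add: Cons_nth_drop_Suc[symmetric])
qed

lemma seg_split:
  assumes "q < j" "j \<le> r" "r \<le> length w"
  shows "seg w q r = seg w q (j - 1) @ w ! (j - 1) # seg w j r"
  using assms seg_append[of q "j - 1" r w] seg_eq_Cons[of "j - 1" r w] by simp

lemma seg_eq_append_ConsD:
  assumes "seg w q r = ys @ b # zs" "r \<le> length w"
  defines "j \<equiv> q + length ys + 1"
  shows "q < j" "j \<le> r" "w ! (j - 1) = b" "seg w j r = zs"
proof -
  have "length (seg w q r) = r - q" using assms(2) unfolding seg_def by simp
  then have "length ys < r - q" using assms(1) by simp
  then show "q < j" "j \<le> r" unfolding j_def by simp_all
  have "w ! (q + length ys) = seg w q r ! length ys"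
    using \<open>length ys < r - q\<close> assms(2) unfolding seg_def by simp
  then show "w ! (j - 1) = b" using assms(1) unfolding j_def by simp
  have "seg w j r = drop (length ys + 1) (seg w q r)"
    unfolding seg_def j_def by (simp add: drop_take add.commute)
  then show "seg w j r = zs" using assms(1) by simp
qed

lemma subseq_seg_mono:
  assumes "q' \<le> q" "r \<le> r'"
  shows "subseq (seg w q r) (seg w q' r')"
proof -
  have "seg w q r = drop (q - q') (take (r - q') (drop q' w))"
    unfolding seg_def using assms by (simp add: drop_take)
  moreover have "take (r - q') (drop q' w) = take (r - q') (seg w q' r')"
    unfolding seg_def using assms by (simp add: min_def)
  ultimately show ?thesis
    by (metis subseq_order.trans prefix_imp_subseq take_is_prefix suffix_drop suffix_imp_subseq)
qed

lemma x_step_first_occurrence: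
  assumes "q < j" "j \<le> length w" "w ! (j - 1) = b"
  obtains j' where "x_step w b q = Some j'" "q < j'" "j' \<le> j" "w ! (j' - 1) = b"
proof -
  let ?P = "\<lambda>j. q < j \<and> j \<le> length w \<and> w ! (j - 1) = b"
  have "?P j" using assms by blast
  define j' where "j' = (LEAST j. ?P j)"
  have "?P j'" "j' \<le> j" unfolding j'_def using LeastI[of ?P j] Least_le[of ?P j] \<open>?P j\<close> by auto
  moreover have "x_step w b q = Some j'" unfolding x_step_def j'_def using \<open>?P j\<close> by auto
  ultimately show ?thesis using that by blast
qed

lemma x_step_eq_SomeI:
  assumes "q < j" "j \<le> length w" "w ! (j - 1) = b" "b \<notin> set (seg w q (j - 1))"
  shows "x_step w b q = Some j"
proof -
  obtain j' where j': "x_step w b q = Some j'" "q < j'" "j' \<le> j" "w ! (j' - 1) = b"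
    using x_step_first_occurrence assms(1-3) .
  have "j' = j"
  proof (rule ccontr)
    assume "j' \<noteq> j"
    then have "seg w q (j - 1) = seg w q (j' - 1) @ b # seg w j' (j - 1)"
      using seg_split[of q j' "j - 1" w] j' assms(2) by simp
    with assms(4) show False by simp
  qed
  with j' show ?thesis by simp
qed

lemma x_step_le_length: "x_step w b q = Some j \<Longrightarrow> j \<le> length w"
  unfolding x_step_def by (metis (mono_tags, lifting) LeastI option.distinct(1) option.inject)

lemma run_from_append:
  "run_from st w q (p @ t) = (case run_from st w q p of None \<Rightarrow> None | Some j \<Rightarrow> run_from st w j t)"
  by (induction p arbitrary: q) (auto split: option.splits)

lemma run_from_x_step_greedy:
  assumes "subseq p (seg w q r)" "q \<le> r" "r \<le> length w"
  shows "\<exists>j. run_from x_step w q p = Some j \<and> q \<le> j \<and> j \<le> r \<and> subseq p (seg w q j)"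
  using assms
proof (induction p arbitrary: q)
  case Nil
  then show ?case by (simp add: seg_def)
next
  case (Cons b p)
  obtain ys zs where yz: "seg w q r = ys @ b # zs" "subseq p zs"
    using list_emb_ConsD[OF Cons.prems(1)] by auto
  note occ = seg_eq_append_ConsD[OF yz(1) Cons.prems(3)]
  obtain j1 where j1: "x_step w b q = Some j1" "q < j1" "j1 \<le> q + length ys + 1" "w ! (j1 - 1) = b"
    using x_step_first_occurrence[of q "q + length ys + 1" w b] occ Cons.prems(3) by auto
  have "subseq p (seg w j1 r)"
    using yz(2) occ(4) subseq_seg_mono[OF j1(3), of r r w] subseq_order.trans by auto
  then obtain j where j: "run_from x_step w j1 p = Some j" "j1 \<le> j" "j \<le> r" "subseq p (seg w j1 j)"
    using Cons.IH[of j1] j1(3) occ(2) Cons.prems(3) by auto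
  have "seg w q j = seg w q (j1 - 1) @ b # seg w j1 j"
    using seg_split[of q j1 j w] j1 j Cons.prems(3) by simp
  then have "subseq (b # p) (seg w q j)" using j(4) by (simp add: subseq_drop_many)
  then show ?case using j1 j by auto
qed

lemma x_ranker_eval_reaches_inserted_letter:
  assumes "subseq p u" "\<not> subseq (p @ [a]) u"
  shows "x_ranker_eval (u @ a # v) (p @ [a]) = Some (length u + 1)"
proof -
  let ?w = "u @ a # v"
  have u: "seg ?w 0 (length u) = u" by (simp add: seg_def)
  then obtain j where j: "run_from x_step ?w 0 p = Some j" "j \<le> length u" "subseq p (seg ?w 0 j)"
    using run_from_x_step_greedy[of p ?w 0 "length u"] assms(1) by auto
  have "a \<notin> set (seg ?w j (length u))"
  proof
    assume "a \<in> set (seg ?w j (length u))"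
    then have "subseq (p @ [a]) (seg ?w 0 j @ seg ?w j (length u))"
      using j(3) by (simp add: list_emb_append_mono subseq_singleton_left)
    moreover have "seg ?w 0 j @ seg ?w j (length u) = u"
      using seg_append[of 0 j "length u" ?w] j(2) u by simp
    ultimately show False using assms(2) by simp
  qed
  then have "x_step ?w a j = Some (length u + 1)"
    using j(2) by (intro x_step_eq_SomeI) (auto simp: nth_append)
  then show ?thesis using j(1) unfolding x_ranker_eval_def by (simp add: run_from_append)
qed

lemma y_step_eq_x_step_rev:
  assumes "p \<le> length w + 1"
  shows "y_step w b p = map_option (\<lambda>j. length w + 1 - j) (x_step (rev w) b (length w + 1 - p))"
proof -
  define n where "n = length w"
  let ?Py = "\<lambda>j. 1 \<le> j \<and> j < p \<and> j \<le> n \<and> w ! (j - 1) = b"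
  let ?Px = "\<lambda>j. n + 1 - p < j \<and> j \<le> n \<and> rev w ! (j - 1) = b"
  have Py_Px: "?Py j \<Longrightarrow> ?Px (n + 1 - j)" for j
    using assms unfolding n_def by (auto simp: rev_nth)
  have Px_Py: "?Px j \<Longrightarrow> ?Py (n + 1 - j)" for j
    using assms unfolding n_def by (auto simp: rev_nth Suc_diff_le)
  show ?thesis
  proof (cases "\<exists>j. ?Px j")
    case True
    define L where "L = (LEAST j. ?Px j)"
    have L: "?Px L" "\<And>j. ?Px j \<Longrightarrow> L \<le> j"
      unfolding L_def by (rule LeastI_ex[OF True], rule Least_le)
    have "(GREATEST j. ?Py j) = n + 1 - L"
    proof (rule Greatest_equality)
      show "?Py (n + 1 - L)" using Px_Py L(1) .
      show "j \<le> n + 1 - L" if "?Py j" for j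
        using L(2)[OF Py_Px[OF that]] that by auto
    qed
    moreover have "\<exists>j. ?Py j" using Px_Py L(1) by blast
    ultimately show ?thesis
      using True unfolding y_step_def x_step_def L_def n_def by simp
  next
    case False
    then have "\<not> (\<exists>j. ?Py j)" using Py_Px by blast
    then show ?thesis using False unfolding y_step_def x_step_def n_def by simp
  qed
qed

lemma run_from_y_step_eq_rev:
  assumes "p \<le> length w + 1"
  shows "run_from y_step w p r
    = map_option (\<lambda>j. length w + 1 - j) (run_from x_step (rev w) (length w + 1 - p) r)"
  using assms
proof (induction r arbitrary: p)
  case Nil
  then show ?case by simp
next
  case (Cons b r)
  show ?case
  proof (cases "x_step (rev w) b (length w + 1 - p)")
    case None
    then show ?thesis using y_step_eq_x_step_rev[OF Cons.prems] by simp
  next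
    case (Some j)
    then have "j \<le> length w" using x_step_le_length by fastforce
    then show ?thesis
      using Some y_step_eq_x_step_rev[OF Cons.prems] Cons.IH[of "length w + 1 - j"] by simp
  qed
qed

lemma y_ranker_eval_eq_rev:
  "y_ranker_eval w r = map_option (\<lambda>j. length w + 1 - j) (x_ranker_eval (rev w) r)"
  unfolding y_ranker_eval_def x_ranker_eval_def by (simp add: run_from_y_step_eq_rev)

lemma subseq_rev: "subseq xs ys \<Longrightarrow> subseq (rev xs) (rev ys)"
  by (induction rule: list_emb.induct) (auto intro: subseq_rev_drop_many)

lemma y_ranker_eval_reaches_inserted_letter:
  assumes "subseq q v" "\<not> subseq (a # q) v"
  shows "y_ranker_eval (u @ a # v) (rev q @ [a]) = Some (length u + 1)"
proof -
  have "\<not> subseq (rev q @ [a]) (rev v)"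
    using subseq_rev[of "rev q @ [a]" "rev v"] assms(2) by auto
  then have "x_ranker_eval (rev v @ a # rev u) (rev q @ [a]) = Some (length v + 1)"
    using x_ranker_eval_reaches_inserted_letter subseq_rev[OF assms(1)] by fastforce
  then show ?thesis by (simp add: y_ranker_eval_eq_rev)
qed

lemma x_attr_le:
  assumes "r \<noteq> []" "set r \<subseteq> A" "x_ranker_eval w r = Some i"
  shows "x_attr A w i \<le> length r"
  unfolding x_attr_def using assms by (intro Least_le) blast

lemma y_attr_le:
  assumes "r \<noteq> []" "set r \<subseteq> A" "y_ranker_eval w r = Some i"
  shows "y_attr A w i \<le> length r"
  unfolding y_attr_def using assms by (intro Least_le) blast

lemma subseq_append_Cons_split:
  assumes "subseq s (u @ a # v)" "\<not> subseq s (u @ v)"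
  obtains p q where "s = p @ a # q" "subseq p u" "subseq q v"
    "\<not> subseq (p @ [a]) u" "\<not> subseq (a # q) v"
proof -
  obtain s1 s2 where s: "s = s1 @ s2" "subseq s1 u" "subseq s2 (a # v)"
    using assms(1) by (auto elim: subseq_appendE)
  define M where "M = {m. m \<le> length s \<and> subseq (take m s) u}"
  define m where "m = Max M"
  have "finite M" "length s1 \<in> M" unfolding M_def using s by auto
  then have "m \<in> M" "length s1 \<le> m" unfolding m_def by (auto intro: Max_in)
  then have m: "m \<le> length s" "subseq (take m s) u" unfolding M_def by auto
  have "drop m s = drop (m - length s1) s2" using s(1) \<open>length s1 \<le> m\<close> by simp
  then have "subseq (drop m s) (a # v)" using s(3) by (metis subseq_order.trans suffix_drop suffix_imp_subseq)
  moreover have "\<not> subseq (drop m s) v"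
    using assms(2) m(2) list_emb_append_mono[of "(=)" "take m s" u "drop m s" v] by auto
  ultimately obtain q where q: "drop m s = a # q" "subseq q v"
    by (cases "drop m s") (auto split: if_splits)
  define p where "p = take m s"
  have s_eq: "s = p @ a # q" unfolding p_def using q(1) by (metis append_take_drop_id)
  have "subseq p u" unfolding p_def by (rule m(2))
  have "\<not> subseq (p @ [a]) u"
  proof
    assume "subseq (p @ [a]) u"
    moreover have "take (m + 1) s = p @ [a]" unfolding p_def take_add q(1) by simp
    moreover have "m + 1 \<le> length s" using arg_cong[OF q(1), of length] by simp
    ultimately have "m + 1 \<in> M" unfolding M_def by simp
    then have "m + 1 \<le> m" unfolding m_def by (rule Max_ge[OF \<open>finite M\<close>])
    then show False by simp
  qed
  moreover have "\<not> subseq (a # q) v"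
    using assms(2) \<open>subseq p u\<close> list_emb_append_mono[of "(=)" p u "a # q" v] s_eq by auto
  ultimately show ?thesis using that s_eq \<open>subseq p u\<close> q(2) by blast
qed

theorem proposition3:
  fixes A :: "'a set" and u v :: "'a list" and a :: 'a and k i :: nat
  assumes "finite A" and "a \<in> A" and "set u \<subseteq> A" and "set v \<subseteq> A"
    and "i = length (u @ [a])"
    and "x_attr A (u @ a # v) i + y_attr A (u @ a # v) i > k + 1"
  shows "simon_cong k (u @ a # v) (u @ v)"
  unfolding simon_cong_def
proof (intro allI impI iffI)
  fix s :: "'a list"
  assume "subseq s (u @ v)"
  moreover have "subseq (u @ v) (u @ a # v)" by (simp add: subseq_append' list_emb.list_emb_Cons)
  ultimately show "subseq s (u @ a # v)" by (rule subseq_order.trans)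
next
  fix s :: "'a list"
  assume "length s \<le> k" "subseq s (u @ a # v)"
  show "subseq s (u @ v)"
  proof (rule ccontr)
    assume "\<not> subseq s (u @ v)"
    then obtain p q where pq: "s = p @ a # q" "subseq p u" "subseq q v"
        "\<not> subseq (p @ [a]) u" "\<not> subseq (a # q) v"
      using \<open>subseq s (u @ a # v)\<close> by (auto elim: subseq_append_Cons_split)
    have "set p \<subseteq> A" "set q \<subseteq> A" using pq(2,3) assms(3,4) by (auto dest: list_emb_set)
    then have "x_attr A (u @ a # v) i \<le> length p + 1" "y_attr A (u @ a # v) i \<le> length q + 1"
      using assms(2,5) x_attr_le[of "p @ [a]"] y_attr_le[of "rev q @ [a]"]
        x_ranker_eval_reaches_inserted_letter[OF pq(2,4)]
        y_ranker_eval_reaches_inserted_letter[OF pq(3,5)] by auto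
    then show False using assms(6) \<open>length s \<le> k\<close> pq(1) by simp
  qed
qed

end
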